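(* Let $\mathcal X,\mathcal Y$ be complex Hilbert spaces and $A:\mathcal X\supset\operatorname{dom}A\to\mathcal Y$ a closed, densely defined linear operator with $\|Ax\|_{\mathcal Y}\ge c\|x\|_{\mathcal X}$ for some $c>0$ and all $x\in\operatorname{dom}A$. Let $\mathcal X_h$ be $\operatorname{dom}A$ with inner product $\langle x,y\rangle_{\mathcal X_h}=\langle Ax,Ay\rangle_{\mathcal Y}$ and $\mathcal Z_h=\mathcal X_h\times\mathcal X$ with the product inner product. Let $B:\mathcal Y\supset\operatorname{dom}B\to\mathcal X$ be closed, densely defined, with $A^*\subset-B$, and define $\mathcal A$ on $\mathcal Z_h$ by $\operatorname{dom}\mathcal A=\{(z_1,z_2)\in\mathcal X_h\times\mathcal X_h: Az_1\in\operatorname{dom}B\}$, $\mathcal A(z_1,z_2)=(z_2,BAz_1)$. Let $\mathcal G_1,\mathcal G_2$ be Hilbert spaces and let $\Lambda=(\Lambda_1,\Lambda_2):\operatorname{dom}A\to\mathcal G_1\times\mathcal G_2^*$ and $\Pi=(\Pi_1,\Pi_2):\operatorname{dom}B\to\mathcal G_1^*\times\mathcal G_2$ be linear maps forming a boundary triplet for the dual pair $(A^*,-B^* )$, i.e. $\Lambda$ and $\Pi$ are surjective and $-\langle By,x\rangle_{\mathcal X}-\langle y,Ax\rangle_{\mathcal Y}=\langle\Pi_1y,\Lambda_1x\rangle_{\mathcal G_1^*,\mathcal G_1}-\langle\Pi_2y,\Lambda_2x\rangle_{\mathcal G_2,\mathcal G_2^*}$ for all $y\in\operatorname{dom}B$,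 $x\in\operatorname{dom}A$. Let $\mathcal G:=\mathcal G_1\times\mathcal G_2$, $\mathcal G^*=\mathcal G_1^*\times\mathcal G_2^*$, and define on $\operatorname{dom}\mathcal A$ $\Gamma_0(z_1,z_2)=(\Lambda_1z_2,\ \Pi_2Az_1)\in\mathcal G$, $\Gamma_1(z_1,z_2)=(-\Pi_1Az_1,\ \Lambda_2z_2)\in\mathcal G^*$. Then $(\mathcal G,\Gamma_0,\Gamma_1)$ is a boundary triplet for $\mathcal A$: the map $(\Gamma_0,\Gamma_1):\operatorname{dom}\mathcal A\to\mathcal G\times\mathcal G^*$ is surjective and $\langle\mathcal Af,g\rangle_{\mathcal Z_h}+\langle f,\mathcal Ag\rangle_{\mathcal Z_h}=\langle\Gamma_1f,\Gamma_0g\rangle_{\mathcal G^*,\mathcal G}+\langle\Gamma_0f,\Gamma_1g\rangle_{\mathcal G,\mathcal G^*}$ for all $f,g\in\operatorname{dom}\mathcal A$.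
   Context: All Hilbert spaces are complex. For a Hilbert space $\mathcal H$, $\mathcal H^*$ denotes its anti-dual (bounded conjugate-linear functionals), $\langle\cdot,\cdot\rangle_{\mathcal H^*,\mathcal H}$ the duality pairing and $\langle h,\phi\rangle_{\mathcal H,\mathcal H^*}:=\overline{\langle\phi,h\rangle_{\mathcal H^*,\mathcal H}}$. The dual-pair relation $A^*\subset-B$ is equivalent to $B^*\subset -A$. It is known that $\mathcal A$ is closed, densely defined and $\mathcal A^*\subset-\mathcal A$, so that $\mathcal A$ is the adjoint of the closed densely defined skew-symmetric operator $\mathcal A^*$. *)

theory Defs
  imports "HOL-Analysis.Analysis"
begin

class complex_vector = real_vector +
  fixes scaleC :: "complex \<Rightarrow> 'a \<Rightarrow> 'a" (infixr \<open>*\<^sub>C\<close> 75)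
  assumes scaleC_add_right: "a *\<^sub>C (x + y) = a *\<^sub>C x + a *\<^sub>C y"
    and scaleC_add_left: "(a + b) *\<^sub>C x = a *\<^sub>C x + b *\<^sub>C x"
    and scaleC_scaleC: "a *\<^sub>C (b *\<^sub>C x) = (a * b) *\<^sub>C x"
    and scaleC_one: "1 *\<^sub>C x = x"
    and scaleR_scaleC: "scaleR r x = complex_of_real r *\<^sub>C x"

text \<open>Complex inner product spaces. The inner product is linear in the first and
  conjugate-linear in the second argument; the norm is the induced one.\<close>
class complex_inner = complex_vector + real_normed_vector +
  fixes cinner :: "'a \<Rightarrow> 'a \<Rightarrow> complex"
  assumes cinner_commute: "cinner x y = cnj (cinner y x)"
    and cinner_add_left: "cinner (x + y) z = cinner x z + cinner y z"
    and cinner_scaleC_left: "cinner (a *\<^sub>C x) y = a * cinner x y"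
    and cinner_ge_zero: "0 \<le> Re (cinner x x)"
    and cinner_eq_zero_iff: "cinner x x = 0 \<longleftrightarrow> x = 0"
    and norm_eq_sqrt_cinner: "norm x = sqrt (Re (cinner x x))"

text \<open>A complex Hilbert space is a type of class complex_inner that is also complete_space.
  The classes are inhabited: complex itself is an instance.\<close>

instantiation complex :: complex_vector
begin
definition scaleC_complex_def: "scaleC a (x::complex) = a * x"
instance
  by standard (auto simp: scaleC_complex_def algebra_simps scaleR_conv_of_real)
end

instantiation complex :: complex_inner
begin
definition cinner_complex_def: "cinner (x::complex) y = x * cnj y"
instance
proof
  fix x y z :: complex and a :: complex
  show "cinner x y = cnj (cinner y x)" by (simp add: cinner_complex_def mult.commute)
  show "cinner (x + y) z = cinner x z + cinner y z" by (simp add: cinner_complex_def algebra_simps)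
  show "cinner (a *\<^sub>C x) y = a * cinner x y" by (simp add: cinner_complex_def scaleC_complex_def)
  show "0 \<le> Re (cinner x x)" by (simp add: cinner_complex_def)
  show "(cinner x x = 0) = (x = 0)" by (simp add: cinner_complex_def)
  show "norm x = sqrt (Re (cinner x x))"
    by (simp add: cinner_complex_def complex_mult_cnj cmod_def power2_eq_square)
qed
end

definition csubspace :: "'a::complex_vector set \<Rightarrow> bool" where
  "csubspace S \<longleftrightarrow> 0 \<in> S \<and> (\<forall>x\<in>S. \<forall>y\<in>S. x + y \<in> S) \<and> (\<forall>c. \<forall>x\<in>S. c *\<^sub>C x \<in> S)"

definition clinear_on :: "'a::complex_vector set \<Rightarrow> ('a \<Rightarrow> 'b::complex_vector) \<Rightarrow> bool" where
  "clinear_on S f \<longleftrightarrow> (\<forall>x\<in>S. \<forall>y\<in>S. f (x + y) = f x + f y) \<and> (\<forall>c. \<forall>x\<in>S. f (c *\<^sub>C x) = c *\<^sub>C f x)"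

definition clinear_on_fun :: "'a::complex_vector set \<Rightarrow> ('a \<Rightarrow> 'g \<Rightarrow> complex) \<Rightarrow> bool" where
  "clinear_on_fun S f \<longleftrightarrow> (\<forall>x\<in>S. \<forall>y\<in>S. \<forall>g. f (x + y) g = f x g + f y g)
     \<and> (\<forall>c. \<forall>x\<in>S. \<forall>g. f (c *\<^sub>C x) g = c * f x g)"

definition lin_op :: "'a::complex_vector set \<Rightarrow> ('a \<Rightarrow> 'b::complex_vector) \<Rightarrow> bool" where
  "lin_op D T \<longleftrightarrow> csubspace D \<and> clinear_on D T"

definition closed_op :: "'a::topological_space set \<Rightarrow> ('a \<Rightarrow> 'b::topological_space) \<Rightarrow> bool" where
  "closed_op D T \<longleftrightarrow> closed {(x, T x) | x. x \<in> D}"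

definition densely_defined :: "'a::topological_space set \<Rightarrow> bool" where
  "densely_defined D \<longleftrightarrow> closure D = UNIV"

definition adjoint_graph :: "'a::complex_inner set \<Rightarrow> ('a \<Rightarrow> 'b::complex_inner) \<Rightarrow> ('b \<times> 'a) set" where
  "adjoint_graph D T = {(y, w). \<forall>x\<in>D. cinner (T x) y = cinner x w}"

text \<open>The relation A^* \<subseteq> -B between operators A (domain DA) and B (domain DB).\<close>
definition adj_sub_neg :: "'a::complex_inner set \<Rightarrow> ('a \<Rightarrow> 'b::complex_inner) \<Rightarrow> 'b set \<Rightarrow> ('b \<Rightarrow> 'a) \<Rightarrow> bool" where
  "adj_sub_neg DA A DB B \<longleftrightarrow> (\<forall>(y, w) \<in> adjoint_graph DA A. y \<in> DB \<and> B y = - w)"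

text \<open>Anti-dual: bounded conjugate-linear functionals; the pairing of phi with h is phi h.\<close>
definition antidual :: "('a::complex_inner \<Rightarrow> complex) set" where
  "antidual = {\<phi>. (\<forall>x y. \<phi> (x + y) = \<phi> x + \<phi> y) \<and> (\<forall>c x. \<phi> (c *\<^sub>C x) = cnj c * \<phi> x)
                  \<and> (\<exists>K. \<forall>x. cmod (\<phi> x) \<le> K * norm x)}"

definition prod_pairing :: "('g1 \<Rightarrow> complex) \<times> ('g2 \<Rightarrow> complex) \<Rightarrow> 'g1 \<times> 'g2 \<Rightarrow> complex" where
  "prod_pairing \<phi> h = fst \<phi> (fst h) + snd \<phi> (snd h)"

text \<open>Boundary triplet for the dual pair (A^*, -B^*):
  Lambda = (L1, L2) on dom A into G1 x G2^*, Pi = (P1, P2) on dom B into G1^* x G2.\<close>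
definition bt_dual_pair ::
  "'x::complex_inner set \<Rightarrow> ('x \<Rightarrow> 'y::complex_inner) \<Rightarrow> 'y set \<Rightarrow> ('y \<Rightarrow> 'x)
   \<Rightarrow> ('x \<Rightarrow> 'g1::complex_inner) \<Rightarrow> ('x \<Rightarrow> 'g2::complex_inner \<Rightarrow> complex)
   \<Rightarrow> ('y \<Rightarrow> 'g1 \<Rightarrow> complex) \<Rightarrow> ('y \<Rightarrow> 'g2) \<Rightarrow> bool" where
  "bt_dual_pair DA A DB B L1 L2 P1 P2 \<longleftrightarrow>
     clinear_on DA L1 \<and> clinear_on_fun DA L2 \<and> clinear_on_fun DB P1 \<and> clinear_on DB P2 \<and>
     (\<lambda>x. (L1 x, L2 x)) ` DA = UNIV \<times> antidual \<and>
     (\<lambda>y. (P1 y, P2 y)) ` DB = antidual \<times> UNIV \<and>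
     (\<forall>y\<in>DB. \<forall>x\<in>DA. - cinner (B y) x - cinner y (A x)
                       = P1 y (L1 x) - cnj (L2 x (P2 y)))"

definition boundary_triplet ::
  "'z set \<Rightarrow> ('z \<Rightarrow> 'z) \<Rightarrow> ('z \<Rightarrow> 'z \<Rightarrow> complex)
   \<Rightarrow> ('z \<Rightarrow> 'g1::complex_inner \<times> 'g2::complex_inner)
   \<Rightarrow> ('z \<Rightarrow> ('g1 \<Rightarrow> complex) \<times> ('g2 \<Rightarrow> complex)) \<Rightarrow> bool" where
  "boundary_triplet D T ip G0 G1 \<longleftrightarrow>
     (\<lambda>f. (G0 f, G1 f)) ` D = UNIV \<times> (antidual \<times> antidual) \<and>
     (\<forall>f\<in>D. \<forall>g\<in>D. ip (T f) g + ip f (T g)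
                     = prod_pairing (G1 f) (G0 g) + cnj (prod_pairing (G1 g) (G0 f)))"

definition Zh_inner :: "('x \<Rightarrow> 'y::complex_inner) \<Rightarrow> 'x::complex_inner \<times> 'x \<Rightarrow> 'x \<times> 'x \<Rightarrow> complex" where
  "Zh_inner A f g = cinner (A (fst f)) (A (fst g)) + cinner (snd f) (snd g)"

definition calA_dom :: "'x set \<Rightarrow> ('x \<Rightarrow> 'y) \<Rightarrow> 'y set \<Rightarrow> ('x \<times> 'x) set" where
  "calA_dom DA A DB = {(z1, z2). z1 \<in> DA \<and> z2 \<in> DA \<and> A z1 \<in> DB}"

definition calA :: "('x \<Rightarrow> 'y) \<Rightarrow> ('y \<Rightarrow> 'x) \<Rightarrow> 'x \<times> 'x \<Rightarrow> 'x \<times> 'x" where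
  "calA A B f = (snd f, B (A (fst f)))"

definition Gamma0 :: "('x \<Rightarrow> 'y) \<Rightarrow> ('x \<Rightarrow> 'g1) \<Rightarrow> ('y \<Rightarrow> 'g2) \<Rightarrow> 'x \<times> 'x \<Rightarrow> 'g1 \<times> 'g2" where
  "Gamma0 A L1 P2 f = (L1 (snd f), P2 (A (fst f)))"

definition Gamma1 :: "('x \<Rightarrow> 'y) \<Rightarrow> ('y \<Rightarrow> 'g1 \<Rightarrow> complex) \<Rightarrow> ('x \<Rightarrow> 'g2 \<Rightarrow> complex)
    \<Rightarrow> 'x \<times> 'x \<Rightarrow> ('g1 \<Rightarrow> complex) \<times> ('g2 \<Rightarrow> complex)" where
  "Gamma1 A P1 L2 f = ((\<lambda>g. - P1 (A (fst f)) g), L2 (snd f))"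

end

theory Submission
  imports Defs
begin

(* The Green identity for calA is the Green identity of the dual pair at (A z1, u2) plus the
   conjugate of the one at (A u1, z2).
   For surjectivity, the components Lambda z2 and Pi (A z1) of (Gamma0, Gamma1) can be
   prescribed independently once Pi is known to stay surjective on dom B \<inter> ran A. As A is
   closed and bounded below, ran A is closed, so every y \<in> dom B splits as y = A z1 - w with
   w orthogonal to ran A. Then w \<in> ker A^* \<subseteq> ker B, and the Green identity says that Pi w
   annihilates Lambda (dom A) = G1 \<times> G2^*; hence Pi w = 0 and Pi (A z1) = Pi y. *)
lemma cinner_add_right: "cinner x (y + z) = cinner x y + cinner x (z::'a::complex_inner)"
  by (metis cinner_commute cinner_add_left complex_cnj_add)

lemma cinner_scaleC_right: "cinner x (a *\<^sub>C y) = cnj a * cinner x (y::'a::complex_inner)"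
  by (metis cinner_commute cinner_scaleC_left complex_cnj_mult)

lemma cinner_zero_left [simp]: "cinner 0 (y::'a::complex_inner) = 0"
  using cinner_add_left [of "0::'a" 0 y] by simp

lemma cinner_zero_right [simp]: "cinner (x::'a::complex_inner) 0 = 0"
  by (metis cinner_commute cinner_zero_left complex_cnj_zero)

lemma cinner_minus_left: "cinner (- x) (y::'a::complex_inner) = - cinner x y"
  using cinner_add_left [of x "- x" y] by (simp add: add_eq_0_iff)

lemma cinner_minus_right: "cinner x (- y::'a::complex_inner) = - cinner x y"
  by (metis cinner_commute cinner_minus_left complex_cnj_minus)

lemma cinner_diff_left: "cinner (x - y) (z::'a::complex_inner) = cinner x z - cinner y z"
  by (simp only: diff_conv_add_uminus cinner_add_left cinner_minus_left)

lemma cinner_diff_right: "cinner x (y - z::'a::complex_inner) = cinner x y - cinner x z"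
  by (simp only: diff_conv_add_uminus cinner_add_right cinner_minus_right)

lemma cinner_eq_0_commute: "cinner x y = 0 \<longleftrightarrow> cinner y (x::'a::complex_inner) = 0"
  by (metis cinner_commute complex_cnj_zero_iff)

lemma scaleC_minus1_left: "(-1) *\<^sub>C (x::'a::complex_vector) = - x"
  using scaleR_scaleC [of "-1" x] by simp

lemma cinner_self_eq_norm_square: "cinner x x = complex_of_real ((norm (x::'a::complex_inner))\<^sup>2)"
proof -
  have "Im (cinner x x) = 0"
    using cinner_commute [of x x] by (metis Im_complex_of_real Reals_cnj_iff complex_is_Real_iff)
  moreover have "Re (cinner x x) = (norm x)\<^sup>2"
    using norm_eq_sqrt_cinner [of x] cinner_ge_zero [of x] by simp
  ultimately show ?thesis by (simp add: complex_eq_iff)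
qed

lemma power2_norm_eq_cinner: "(norm (x::'a::complex_inner))\<^sup>2 = Re (cinner x x)"
  by (simp add: cinner_self_eq_norm_square)

lemma norm_diff_projection_square:
  fixes x y :: "'a::complex_inner"
  assumes "y \<noteq> 0"
  shows "(norm (x - (cinner x y / cinner y y) *\<^sub>C y))\<^sup>2
           = (norm x)\<^sup>2 - (cmod (cinner x y))\<^sup>2 / (norm y)\<^sup>2"
proof -
  define N where "N = (norm y)\<^sup>2"
  have "N > 0" using assms by (simp add: N_def)
  have yy: "cinner y y = complex_of_real N" by (simp add: cinner_self_eq_norm_square N_def)
  have "cinner x y * cnj (cinner x y) = complex_of_real ((cmod (cinner x y))\<^sup>2)"
    by (rule complex_norm_square [symmetric])
  with \<open>N > 0\<close> have "cinner (x - (cinner x y / N) *\<^sub>C y) (x - (cinner x y / N) *\<^sub>C y)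
      = cinner x x - complex_of_real ((cmod (cinner x y))\<^sup>2 / N)"
    by (simp add: cinner_diff_left cinner_diff_right cinner_scaleC_left cinner_scaleC_right
        yy cinner_commute [of y x] field_simps power2_eq_square)
  then have "Re (cinner (x - (cinner x y / N) *\<^sub>C y) (x - (cinner x y / N) *\<^sub>C y))
      = (norm x)\<^sup>2 - (cmod (cinner x y))\<^sup>2 / N"
    by (simp add: cinner_self_eq_norm_square)
  then show ?thesis
    by (simp add: power2_norm_eq_cinner [symmetric] yy N_def)
qed

lemma norm_cinner_le: "cmod (cinner x y) \<le> norm x * norm (y::'a::complex_inner)"
proof (cases "y = 0")
  case False
  have "0 \<le> (norm x)\<^sup>2 - (cmod (cinner x y))\<^sup>2 / (norm y)\<^sup>2"
    using norm_diff_projection_square [OF False, of x] by (metis zero_le_power2)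
  with False have "(cmod (cinner x y))\<^sup>2 \<le> (norm x * norm y)\<^sup>2"
    by (simp add: field_simps power_mult_distrib)
  then show ?thesis by (simp add: power2_le_iff_abs_le)
qed simp

lemma parallelogram_law:
  "(norm (x + y))\<^sup>2 + (norm (x - y))\<^sup>2 = 2 * (norm x)\<^sup>2 + 2 * (norm (y::'a::complex_inner))\<^sup>2"
  unfolding power2_norm_eq_cinner
  by (simp add: cinner_add_left cinner_add_right cinner_diff_left cinner_diff_right)

lemma csubspace_diff: "csubspace S \<Longrightarrow> u \<in> S \<Longrightarrow> v \<in> S \<Longrightarrow> u - v \<in> S"
  unfolding csubspace_def by (metis diff_conv_add_uminus scaleC_minus1_left)

lemma csubspace_midpoint: "csubspace S \<Longrightarrow> u \<in> S \<Longrightarrow> v \<in> S \<Longrightarrow> (1/2) *\<^sub>R (u + v) \<in> S"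
  unfolding csubspace_def scaleR_scaleC by blast

lemma clinear_on_diff:
  assumes "csubspace D" "clinear_on D T" "u \<in> D" "v \<in> D"
  shows "T (u - v) = T u - T v"
proof -
  have "(-1) *\<^sub>C v \<in> D" using assms(1,4) by (simp add: csubspace_def)
  with assms have "T (u + (-1) *\<^sub>C v) = T u + (-1) *\<^sub>C T v"
    by (simp add: clinear_on_def)
  then show ?thesis by (simp add: scaleC_minus1_left)
qed

lemma csubspace_image:
  assumes "csubspace D" "clinear_on D T"
  shows "csubspace (T ` D)"
  unfolding csubspace_def
proof (intro conjI ballI allI)
  have "0 \<in> D" using assms(1) by (simp add: csubspace_def)
  then show "0 \<in> T ` D" using clinear_on_diff [OF assms, of 0 0] by (metis diff_self image_eqI)
next
  fix x y assume "x \<in> T ` D" "y \<in> T ` D"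
  then obtain u v where "u \<in> D" "v \<in> D" "x = T u" "y = T v" by blast
  with assms show "x + y \<in> T ` D" unfolding csubspace_def clinear_on_def by (metis image_eqI)
next
  fix a x assume "x \<in> T ` D"
  then obtain u where "u \<in> D" "x = T u" by blast
  with assms show "a *\<^sub>C x \<in> T ` D" unfolding csubspace_def clinear_on_def by (metis image_eqI)
qed

lemma closed_range_if_bounded_below:
  fixes A :: "'x::{complex_inner, complete_space} \<Rightarrow> 'y::complex_inner"
  assumes lin: "lin_op D A" and graph: "closed_op D A" and "c > 0"
    and below: "\<forall>x\<in>D. norm (A x) \<ge> c * norm x"
  shows "closed (A ` D)"
  unfolding closed_sequential_limits
proof (intro allI impI, elim conjE)
  fix r l assume "\<forall>n. r n \<in> A ` D" and "r \<longlonglongrightarrow> l"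
  then have "\<forall>n. \<exists>x. x \<in> D \<and> r n = A x" by blast
  then obtain x where x: "\<And>n. x n \<in> D" and r: "r = (\<lambda>n. A (x n))" by metis
  have "Cauchy x"
  proof (rule CauchyI)
    fix e :: real assume "e > 0"
    with \<open>c > 0\<close> obtain M where M: "\<forall>m\<ge>M. \<forall>n\<ge>M. norm (r m - r n) < e * c"
      using CauchyD [OF LIMSEQ_imp_Cauchy [OF \<open>r \<longlonglongrightarrow> l\<close>], of "e * c"] by auto
    have "norm (x m - x n) < e" if "m \<ge> M" "n \<ge> M" for m n
    proof -
      have "c * norm (x m - x n) \<le> norm (A (x m - x n))"
        using below lin x csubspace_diff [of D "x m" "x n"] by (simp add: lin_op_def)
      also have "\<dots> = norm (r m - r n)"
        using lin x clinear_on_diff [of D A "x m" "x n"] by (simp add: lin_op_def r)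
      also have "\<dots> < c * e" using M that by (simp add: mult.commute)
      finally show ?thesis using \<open>c > 0\<close> by simp
    qed
    then show "\<exists>M. \<forall>m\<ge>M. \<forall>n\<ge>M. norm (x m - x n) < e" by blast
  qed
  then obtain a where "x \<longlonglongrightarrow> a" using Cauchy_convergent_iff convergent_def by blast
  with \<open>r \<longlonglongrightarrow> l\<close> have lim: "(\<lambda>n. (x n, A (x n))) \<longlonglongrightarrow> (a, l)"
    unfolding r by (intro tendsto_Pair)
  have "(x n, A (x n)) \<in> {(x, A x) | x. x \<in> D}" for n
    using x by blast
  with graph [unfolded closed_op_def] have "(a, l) \<in> {(x, A x) | x. x \<in> D}"
    using lim by (rule closed_sequentially)
  then show "l \<in> A ` D" by auto
qed

lemma minimizing_sequence_Cauchy: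
  fixes y :: "'a::complex_inner"
  assumes midpoint: "\<And>u v. u \<in> S \<Longrightarrow> v \<in> S \<Longrightarrow> (1/2) *\<^sub>R (u + v) \<in> S"
    and lower: "\<And>s. s \<in> S \<Longrightarrow> d \<le> (norm (y - s))\<^sup>2"
    and r: "\<And>n. r n \<in> S" and approx: "\<And>n. (norm (y - r n))\<^sup>2 < d + 1 / (real n + 1)"
  shows "Cauchy r"
proof -
  have bound: "(norm (r m - r n))\<^sup>2 \<le> 2 / (real n + 1) + 2 / (real m + 1)" for m n
  proof -
    define a b where "a = y - r n" and "b = y - r m"
    have "a + b = 2 *\<^sub>R (y - (1/2) *\<^sub>R (r n + r m))"
      by (simp add: a_def b_def algebra_simps scaleR_2)
    then have "(norm (a + b))\<^sup>2 = 4 * (norm (y - (1/2) *\<^sub>R (r n + r m)))\<^sup>2"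
      by (simp add: power_mult_distrib)
    moreover have "d \<le> (norm (y - (1/2) *\<^sub>R (r n + r m)))\<^sup>2" using lower midpoint r by blast
    moreover have "a - b = r m - r n" by (simp add: a_def b_def)
    then have "(norm (r m - r n))\<^sup>2 = 2 * (norm a)\<^sup>2 + 2 * (norm b)\<^sup>2 - (norm (a + b))\<^sup>2"
      using parallelogram_law [of a b] by simp
    ultimately show ?thesis
      using approx [of n] approx [of m] unfolding a_def b_def by linarith
  qed
  show "Cauchy r"
  proof (rule CauchyI)
    fix e :: real assume "e > 0"
    obtain M :: nat where "4 / e\<^sup>2 < real M" using reals_Archimedean2 by blast
    then have "4 / e\<^sup>2 < real M + 1" by simp
    moreover have "e\<^sup>2 > 0" using \<open>e > 0\<close> by simp
    ultimately have "4 < e\<^sup>2 * (real M + 1)" by (simp add: field_simps)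
    then have M: "2 / (real M + 1) < e\<^sup>2 / 2" by (simp add: field_simps)
    have "norm (r m - r n) < e" if "M \<le> m" "M \<le> n" for m n
    proof -
      have "2 / (real n + 1) \<le> 2 / (real M + 1)" "2 / (real m + 1) \<le> 2 / (real M + 1)"
        using that by (simp_all add: frac_le)
      with bound [of m n] M have "(norm (r m - r n))\<^sup>2 < e\<^sup>2" by linarith
      with \<open>e > 0\<close> show ?thesis by (simp add: power_less_imp_less_base)
    qed
    then show "\<exists>M. \<forall>m\<ge>M. \<forall>n\<ge>M. norm (r m - r n) < e" by blast
  qed
qed

lemma nearest_point_exists:
  fixes S :: "'a::{complex_inner, complete_space} set"
  assumes "closed S" "S \<noteq> {}"
    and midpoint: "\<And>u v. u \<in> S \<Longrightarrow> v \<in> S \<Longrightarrow> (1/2) *\<^sub>R (u + v) \<in> S"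
  shows "\<exists>l\<in>S. \<forall>s\<in>S. norm (y - l) \<le> norm (y - s)"
proof -
  define d where "d = (INF s\<in>S. (norm (y - s))\<^sup>2)"
  have bdd: "bdd_below ((\<lambda>s. (norm (y - s))\<^sup>2) ` S)"
    by (rule bdd_belowI2 [where m = 0]) simp
  have lower: "d \<le> (norm (y - s))\<^sup>2" if "s \<in> S" for s
    unfolding d_def using bdd that by (rule cINF_lower)
  have "\<exists>s\<in>S. (norm (y - s))\<^sup>2 < d + 1 / (real n + 1)" for n
  proof -
    have "d < d + 1 / (real n + 1)" by simp
    then show ?thesis using cINF_less_iff [OF \<open>S \<noteq> {}\<close> bdd] unfolding d_def by blast
  qed
  then obtain r where r: "\<And>n. r n \<in> S"
    and approx: "\<And>n. (norm (y - r n))\<^sup>2 < d + 1 / (real n + 1)"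
    by metis
  have "Cauchy r" using midpoint lower r approx by (rule minimizing_sequence_Cauchy)
  then obtain l where "r \<longlonglongrightarrow> l" using Cauchy_convergent_iff convergent_def by blast
  with \<open>closed S\<close> r have "l \<in> S" by (rule closed_sequentially)
  have "(\<lambda>n. (norm (y - r n))\<^sup>2) \<longlonglongrightarrow> (norm (y - l))\<^sup>2"
    using \<open>r \<longlonglongrightarrow> l\<close> by (intro tendsto_intros)
  moreover have "(\<lambda>n. 1 / (real n + 1)) \<longlonglongrightarrow> 0"
    using LIMSEQ_inverse_real_of_nat by (simp add: inverse_eq_divide add.commute)
  then have "(\<lambda>n. d + 1 / (real n + 1)) \<longlonglongrightarrow> d + 0"
    by (rule tendsto_add [OF tendsto_const])
  ultimately have "(norm (y - l))\<^sup>2 \<le> d + 0"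
    by (rule LIMSEQ_le) (auto intro: less_imp_le approx)
  then have "norm (y - l) \<le> norm (y - s)" if "s \<in> S" for s
    using lower [OF that] by (simp add: power2_le_imp_le)
  with \<open>l \<in> S\<close> show ?thesis by blast
qed

lemma nearest_point_orthogonal:
  fixes S :: "'a::complex_inner set"
  assumes "csubspace S" "l \<in> S" and nearest: "\<forall>s\<in>S. norm (y - l) \<le> norm (y - s)"
    and "s \<in> S"
  shows "cinner s (y - l) = 0"
proof (cases "s = 0")
  case False
  define t where "t = cinner (y - l) s / cinner s s"
  have "l + t *\<^sub>C s \<in> S" using assms by (simp add: csubspace_def)
  then have "norm (y - l) \<le> norm ((y - l) - t *\<^sub>C s)"
    using nearest by (simp add: diff_diff_eq)
  then have "(norm (y - l))\<^sup>2 \<le> (norm ((y - l) - t *\<^sub>C s))\<^sup>2"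
    by (rule power_mono) simp
  also have "\<dots> = (norm (y - l))\<^sup>2 - (cmod (cinner (y - l) s))\<^sup>2 / (norm s)\<^sup>2"
    unfolding t_def by (rule norm_diff_projection_square [OF False])
  finally have "(cmod (cinner (y - l) s))\<^sup>2 / (norm s)\<^sup>2 \<le> 0" by simp
  with False have "(cmod (cinner (y - l) s))\<^sup>2 \<le> 0" by (simp add: divide_le_0_iff)
  then have "cinner (y - l) s = 0" by simp
  then show ?thesis by (simp add: cinner_eq_0_commute)
qed simp

lemma orthogonal_projection_exists:
  fixes S :: "'a::{complex_inner, complete_space} set"
  assumes "csubspace S" "closed S"
  shows "\<exists>r\<in>S. \<forall>s\<in>S. cinner s (y - r) = 0"
proof -
  have "S \<noteq> {}" using assms(1) by (auto simp: csubspace_def)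
  then obtain l where "l \<in> S" "\<forall>s\<in>S. norm (y - l) \<le> norm (y - s)"
    using nearest_point_exists [OF assms(2) _ csubspace_midpoint [OF assms(1)]] by blast
  then show ?thesis using nearest_point_orthogonal [OF assms(1)] by blast
qed

lemma antidual_uminus: "\<phi> \<in> antidual \<Longrightarrow> (\<lambda>g. - \<phi> g) \<in> antidual"
  unfolding antidual_def by simp

lemma antidual_zero: "(\<lambda>_::'a::complex_inner. 0) \<in> antidual"
  unfolding antidual_def by (auto intro: exI [of _ 0])

lemma antidual_cinner: "cinner (a::'a::complex_inner) \<in> antidual"
  unfolding antidual_def
  using cinner_add_right cinner_scaleC_right norm_cinner_le [of a] by blast

lemma bt_dual_pairD:
  assumes "bt_dual_pair DA A DB B L1 L2 P1 P2"
  shows "clinear_on_fun DB P1" "clinear_on DB P2"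
    and "(\<lambda>x. (L1 x, L2 x)) ` DA = UNIV \<times> antidual"
    and "(\<lambda>y. (P1 y, P2 y)) ` DB = antidual \<times> UNIV"
    and "\<And>y x. y \<in> DB \<Longrightarrow> x \<in> DA \<Longrightarrow>
           - cinner (B y) x - cinner y (A x) = P1 y (L1 x) - cnj (L2 x (P2 y))"
  using assms unfolding bt_dual_pair_def by auto

lemma bt_dual_pair_Pi_vanishes_on_orthogonal_range:
  assumes AB: "adj_sub_neg DA A DB B" and bt: "bt_dual_pair DA A DB B L1 L2 P1 P2"
    and perp: "\<And>x. x \<in> DA \<Longrightarrow> cinner (A x) w = 0"
  shows "w \<in> DB" "P1 w = (\<lambda>_. 0)" "P2 w = 0"
proof -
  have "(w, 0) \<in> adjoint_graph DA A" using perp by (simp add: adjoint_graph_def)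
  with AB have w: "w \<in> DB" "B w = 0" unfolding adj_sub_neg_def by auto
  then show "w \<in> DB" by simp
  have green: "P1 w (L1 x) = cnj (L2 x (P2 w))" if "x \<in> DA" for x
    using bt_dual_pairD(5) [OF bt w(1) that] perp [OF that] w(2)
    by (simp add: cinner_eq_0_commute [of "A x"])
  have Lambda_onto: "\<exists>x\<in>DA. L1 x = g \<and> L2 x = \<phi>" if "\<phi> \<in> antidual" for g \<phi>
  proof -
    have "(g, \<phi>) \<in> (\<lambda>x. (L1 x, L2 x)) ` DA" using bt_dual_pairD(3) [OF bt] that by simp
    then show ?thesis by force
  qed
  have P1w: "P1 w g = 0" for g
    using Lambda_onto [OF antidual_zero, of g] green by force
  then show "P1 w = (\<lambda>_. 0)" by blast
  obtain x where "x \<in> DA" "L1 x = 0" "L2 x = cinner (P2 w)"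
    using Lambda_onto [OF antidual_cinner] by blast
  with green P1w have "cinner (P2 w) (P2 w) = 0" by force
  then show "P2 w = 0" by (simp add: cinner_eq_zero_iff)
qed

lemma bt_dual_pair_Pi_surj_on_range:
  fixes A :: "'x::{complex_inner, complete_space} \<Rightarrow> 'y::{complex_inner, complete_space}"
    and P1 :: "'y \<Rightarrow> 'g1::complex_inner \<Rightarrow> complex" and P2 :: "'y \<Rightarrow> 'g2::complex_inner"
  assumes A_lin: "lin_op DA A" and A_closed: "closed_op DA A"
    and "c > 0" and A_below: "\<forall>x\<in>DA. norm (A x) \<ge> c * norm x"
    and B_lin: "lin_op DB B" and AB: "adj_sub_neg DA A DB B"
    and bt: "bt_dual_pair DA A DB B L1 L2 P1 P2"
  shows "(\<lambda>y. (P1 y, P2 y)) ` (DB \<inter> A ` DA) = antidual \<times> UNIV"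
proof
  show "(\<lambda>y. (P1 y, P2 y)) ` (DB \<inter> A ` DA) \<subseteq> antidual \<times> UNIV"
    using bt_dual_pairD(4) [OF bt] by blast
next
  show "antidual \<times> UNIV \<subseteq> (\<lambda>y. (P1 y, P2 y)) ` (DB \<inter> A ` DA)"
  proof
    fix p :: "('g1 \<Rightarrow> complex) \<times> 'g2" assume "p \<in> antidual \<times> UNIV"
    then have "p \<in> (\<lambda>y. (P1 y, P2 y)) ` DB" using bt_dual_pairD(4) [OF bt] by simp
    then obtain y where p: "p = (P1 y, P2 y)" and "y \<in> DB" by (rule imageE)
    have "csubspace (A ` DA)" using A_lin csubspace_image by (auto simp: lin_op_def)
    moreover have "closed (A ` DA)"
      using A_lin A_closed \<open>c > 0\<close> A_below by (rule closed_range_if_bounded_below)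
    ultimately obtain r where "r \<in> A ` DA" and perp: "\<forall>s\<in>A ` DA. cinner s (y - r) = 0"
      using orthogonal_projection_exists by blast
    define w where "w = r - y"
    have "cinner (A x) w = 0" if "x \<in> DA" for x
    proof -
      have "cinner (A x) w = - cinner (A x) (y - r)"
        unfolding w_def by (metis cinner_minus_right minus_diff_eq)
      then show ?thesis using perp that by simp
    qed
    then have w: "w \<in> DB" "P1 w = (\<lambda>_. 0)" "P2 w = 0"
      using bt_dual_pair_Pi_vanishes_on_orthogonal_range [OF AB bt] by blast+
    have r: "r = y + w" by (simp add: w_def)
    have "r \<in> DB" using B_lin \<open>y \<in> DB\<close> w(1) by (simp add: r lin_op_def csubspace_def)
    moreover have "P1 r = P1 y"
      using bt_dual_pairD(1) [OF bt] \<open>y \<in> DB\<close> w(1,2) by (auto simp: r clinear_on_fun_def)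
    moreover have "P2 r = P2 y"
      using bt_dual_pairD(2) [OF bt] \<open>y \<in> DB\<close> w(1,3) by (simp add: r clinear_on_def)
    ultimately have "p = (P1 r, P2 r)" "r \<in> DB \<inter> A ` DA"
      using \<open>r \<in> A ` DA\<close> p by simp_all
    then show "p \<in> (\<lambda>y. (P1 y, P2 y)) ` (DB \<inter> A ` DA)" by (rule image_eqI)
  qed
qed

lemma Gamma_surj:
  fixes L1 :: "'x::complex_inner \<Rightarrow> 'g1::complex_inner"
    and L2 :: "'x \<Rightarrow> 'g2::complex_inner \<Rightarrow> complex"
    and P1 :: "'y::complex_inner \<Rightarrow> 'g1 \<Rightarrow> complex" and P2 :: "'y \<Rightarrow> 'g2"
  assumes bt: "bt_dual_pair DA A DB B L1 L2 P1 P2"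
    and Pi_range: "(\<lambda>y. (P1 y, P2 y)) ` (DB \<inter> A ` DA) = antidual \<times> UNIV"
  shows "(\<lambda>f. (Gamma0 A L1 P2 f, Gamma1 A P1 L2 f)) ` calA_dom DA A DB
           = UNIV \<times> (antidual \<times> antidual)"
proof
  show "(\<lambda>f. (Gamma0 A L1 P2 f, Gamma1 A P1 L2 f)) ` calA_dom DA A DB
          \<subseteq> UNIV \<times> (antidual \<times> antidual)"
  proof (rule image_subsetI)
    fix f assume "f \<in> calA_dom DA A DB"
    then have "A (fst f) \<in> DB" "snd f \<in> DA" by (auto simp: calA_dom_def)
    then have "P1 (A (fst f)) \<in> antidual" "L2 (snd f) \<in> antidual"
      using bt_dual_pairD(3,4) [OF bt] by blast+
    then show "(Gamma0 A L1 P2 f, Gamma1 A P1 L2 f) \<in> UNIV \<times> (antidual \<times> antidual)"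
      by (simp add: Gamma1_def antidual_uminus)
  qed
next
  show "UNIV \<times> (antidual \<times> antidual)
          \<subseteq> (\<lambda>f. (Gamma0 A L1 P2 f, Gamma1 A P1 L2 f)) ` calA_dom DA A DB"
  proof clarify
    fix g1 :: 'g1 and g2 :: 'g2 and \<phi>1 :: "'g1 \<Rightarrow> complex" and \<phi>2 :: "'g2 \<Rightarrow> complex"
    assume "\<phi>1 \<in> antidual" "\<phi>2 \<in> antidual"
    have "(g1, \<phi>2) \<in> (\<lambda>x. (L1 x, L2 x)) ` DA"
      using bt_dual_pairD(3) [OF bt] \<open>\<phi>2 \<in> antidual\<close> by simp
    then obtain z2 where z2: "(g1, \<phi>2) = (L1 z2, L2 z2)" and "z2 \<in> DA" by (rule imageE)
    have "((\<lambda>g. - \<phi>1 g), g2) \<in> (\<lambda>y. (P1 y, P2 y)) ` (DB \<inter> A ` DA)"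
      using Pi_range antidual_uminus [OF \<open>\<phi>1 \<in> antidual\<close>] by simp
    then obtain z1 where z1: "((\<lambda>g. - \<phi>1 g), g2) = (P1 (A z1), P2 (A z1))"
      and "A z1 \<in> DB" "z1 \<in> DA"
      by blast
    from z1 have "P1 (A z1) = (\<lambda>g. - \<phi>1 g)" "P2 (A z1) = g2" by simp_all
    with z2 have "Gamma0 A L1 P2 (z1, z2) = (g1, g2)" "Gamma1 A P1 L2 (z1, z2) = (\<phi>1, \<phi>2)"
      by (simp_all add: Gamma0_def Gamma1_def)
    moreover have "(z1, z2) \<in> calA_dom DA A DB"
      using \<open>z1 \<in> DA\<close> \<open>z2 \<in> DA\<close> \<open>A z1 \<in> DB\<close> by (simp add: calA_dom_def)
    ultimately show "((g1, g2), \<phi>1, \<phi>2) \<in> (\<lambda>f. (Gamma0 A L1 P2 f, Gamma1 A P1 L2 f)) ` calA_dom DA A DB"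
      by (metis (no_types, lifting) image_eqI)
  qed
qed

lemma calA_Green_identity:
  assumes bt: "bt_dual_pair DA A DB B L1 L2 P1 P2"
    and "f \<in> calA_dom DA A DB" "g \<in> calA_dom DA A DB"
  shows "Zh_inner A (calA A B f) g + Zh_inner A f (calA A B g)
           = prod_pairing (Gamma1 A P1 L2 f) (Gamma0 A L1 P2 g)
             + cnj (prod_pairing (Gamma1 A P1 L2 g) (Gamma0 A L1 P2 f))"
proof -
  obtain z1 z2 u1 u2 where fg: "f = (z1, z2)" "g = (u1, u2)" by fastforce
  with assms(2,3) have "z2 \<in> DA" "A z1 \<in> DB" "u2 \<in> DA" "A u1 \<in> DB"
    by (simp_all add: calA_dom_def)
  then have "- cinner (B (A z1)) u2 - cinner (A z1) (A u2)
               = P1 (A z1) (L1 u2) - cnj (L2 u2 (P2 (A z1)))"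
    and "cnj (- cinner (B (A u1)) z2 - cinner (A u1) (A z2))
               = cnj (P1 (A u1) (L1 z2) - cnj (L2 z2 (P2 (A u1))))"
    using bt_dual_pairD(5) [OF bt] by simp_all
  then show ?thesis
    using cinner_commute [of z2 "B (A u1)"] cinner_commute [of "A z2" "A u1"]
    by (simp add: fg Zh_inner_def calA_def Gamma0_def Gamma1_def prod_pairing_def algebra_simps)
qed

theorem theorem3p3:
  fixes DA :: "'x::{complex_inner, complete_space} set"
    and A :: "'x \<Rightarrow> 'y::{complex_inner, complete_space}"
    and DB :: "'y set" and B :: "'y \<Rightarrow> 'x"
    and L1 :: "'x \<Rightarrow> 'g1::{complex_inner, complete_space}"
    and L2 :: "'x \<Rightarrow> 'g2::{complex_inner, complete_space} \<Rightarrow> complex"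
    and P1 :: "'y \<Rightarrow> 'g1 \<Rightarrow> complex" and P2 :: "'y \<Rightarrow> 'g2"
    and c :: real
  assumes A_lin: "lin_op DA A" and A_closed: "closed_op DA A" and A_dense: "densely_defined DA"
    and c_pos: "c > 0" and A_below: "\<forall>x\<in>DA. norm (A x) \<ge> c * norm x"
    and B_lin: "lin_op DB B" and B_closed: "closed_op DB B" and B_dense: "densely_defined DB"
    and AB: "adj_sub_neg DA A DB B"
    and bt: "bt_dual_pair DA A DB B L1 L2 P1 P2"
  shows "boundary_triplet (calA_dom DA A DB) (calA A B) (Zh_inner A)
           (Gamma0 A L1 P2) (Gamma1 A P1 L2)"
proof -
  have "(\<lambda>y. (P1 y, P2 y)) ` (DB \<inter> A ` DA) = antidual \<times> UNIV"
    using A_lin A_closed c_pos A_below B_lin AB bt by (rule bt_dual_pair_Pi_surj_on_range)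
  then show ?thesis
    unfolding boundary_triplet_def
    using Gamma_surj [OF bt] calA_Green_identity [OF bt] by blast
qed

end
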